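(* Let $\mathcal{D}\subset\mathbb{R}^d$ be bounded with non-empty interior $\mathcal{D}^\circ$, and let $\mathcal{C}\subset\Gamma\backslash G\times\mathcal{D}^\circ$ be compact. Then there exists $\kappa(\mathcal{C})>0$ such that (i) $F(M,t)<\kappa(\mathcal{C})$ whenever $(\Gamma M,t)\in\mathcal{C}$, and (ii) $F$ is continuous at every $(\Gamma M,t)\in\mathcal{C}$ satisfying \[(\mathbb{Z}^{d+1}M\setminus\{0\})\cap\partial\big((\mathcal{D}-t)\times[0,\kappa(\mathcal{C})]\big)=\emptyset .\]
   Context: Let $G=\operatorname{SL}(d+1,\mathbb{R})$ and $\Gamma=\operatorname{SL}(d+1,\mathbb{Z})$; vectors are row vectors, and $\mathbb{Z}^{d+1}M$ is the lattice spanned by the rows of $M$. For $M\in G$ and $t\in\mathcal{D}$, $F(M,t)=\min\{y>0\mid (x,y)\in\mathbb{Z}^{d+1}M,\ x+t\in\mathcal{D}\}$ (with $x\in\mathbb{R}^d$, $y\in\mathbb{R}$), and $F(M,t)=\infty$ if no minimum exists; $F(M,t)$ depends only on $\Gamma M$, so $F$ is a function on $\Gamma\backslash G\times\mathcal{D}^\circ$. $\mathcal{D}-t=\{x-t\mid x\in\mathcal{D}\}$. *)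

theory Defs
  imports "HOL-Analysis.Analysis"
begin

text \<open>Dimension d is the cardinality of the finite type 'n; indices of R^(d+1) are
  'n option, with the coordinate None playing the role of the last coordinate y.
  Vectors are row vectors; the lattice Z^(d+1) M is the set of v v* M with v integral.\<close>

type_synonym 'n mat1 = "real ^ 'n option ^ 'n option"

definition SLR :: "'n::finite mat1 set" where
  "SLR = {M. det M = 1}"

definition SLZ :: "'n::finite mat1 set" where
  "SLZ = {M. det M = 1 \<and> (\<forall>i j. M $ i $ j \<in> \<int>)}"

definition int_vecs :: "(real ^ 'n::finite option) set" where
  "int_vecs = {v. \<forall>i. v $ i \<in> \<int>}"

definition split_vec :: "real ^ 'n::finite option \<Rightarrow> (real ^ 'n) \<times> real" where
  "split_vec w = ((\<chi> i. w $ Some i), w $ None)"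

definition lattice :: "'n::finite mat1 \<Rightarrow> ((real ^ 'n) \<times> real) set" where
  "lattice M = {split_vec (v v* M) | v. v \<in> int_vecs}"

definition Ffun :: "(real ^ 'n::finite) set \<Rightarrow> 'n mat1 \<Rightarrow> real ^ 'n \<Rightarrow> ereal" where
  "Ffun D M t =
    (let S = {y. y > 0 \<and> (\<exists>x. (x, y) \<in> lattice M \<and> x + t \<in> D)}
     in if (\<exists>y\<in>S. \<forall>z\<in>S. y \<le> z) then ereal (THE y. y \<in> S \<and> (\<forall>z\<in>S. y \<le> z)) else \<infinity>)"

definition coset :: "'n::finite mat1 \<Rightarrow> 'n mat1 set" where
  "coset M = {g ** M | g. g \<in> SLZ}"

definition cosets :: "'n::finite mat1 set set" where
  "cosets = coset ` SLR"

definition quot_top :: "'n::finite mat1 set topology" where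
  "quot_top = topology (\<lambda>U. U \<subseteq> cosets \<and> openin (top_of_set SLR) {M \<in> SLR. coset M \<in> U})"

text \<open>The function F on Gamma\G x D, via any representative (well defined).\<close>
definition Fq :: "(real ^ 'n::finite) set \<Rightarrow> ('n mat1 set) \<times> (real ^ 'n) \<Rightarrow> ereal" where
  "Fq D p = Ffun D (SOME M. M \<in> fst p) (snd p)"

definition continuous_at_pt :: "'a topology \<Rightarrow> ('a \<Rightarrow> ereal) \<Rightarrow> 'a \<Rightarrow> bool" where
  "continuous_at_pt X f p \<longleftrightarrow>
     (\<forall>V. open V \<and> f p \<in> V \<longrightarrow> (\<exists>U. openin X U \<and> p \<in> U \<and> (\<forall>q\<in>U. f q \<in> V)))"

end

theory Submission
  imports Defs
begin

(* Part (i): for each (M, t), Dirichlet's simultaneous approximation theorem yields a lattice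
   vector of M of positive height whose horizontal part is so short that x + t lies in the
   interior of D.  This persists for all (M', t') near (M, t), so F is locally bounded, and
   compactness of C gives the uniform bound kappa.

   Part (ii): since D is bounded, for (M', t') near (M, t) every lattice vector of height at most
   kappa over D - t' comes from one finite set of integer vectors.  No nonzero lattice point of M
   lies on the boundary of (D - t) x [0, kappa], so under a small perturbation each of these
   finitely many points either stays inside the box, where its height is at least about F(M, t),
   or stays outside it; the minimising point itself stays inside.  Hence F(M', t') is close to
   F(M, t). *)

lemma compactin_uniform_bound:
  fixes f :: "'a \<Rightarrow> ereal"
  assumes "compactin X C"
    and "\<And>p. p \<in> C \<Longrightarrow> \<exists>U k. openin X U \<and> p \<in> U \<and> (\<forall>q\<in>U. f q < ereal k)"
  shows "\<exists>\<kappa>>0. \<forall>p\<in>C. f p < ereal \<kappa>"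
proof -
  obtain U k where Uk: "\<And>p. p \<in> C \<Longrightarrow> openin X (U p) \<and> p \<in> U p \<and> (\<forall>q\<in>U p. f q < ereal (k p))"
    using assms(2) by metis
  then obtain \<V> where "finite \<V>" "\<V> \<subseteq> U ` C" "C \<subseteq> \<Union>\<V>"
    using assms(1) unfolding compactin_def by (metis (no_types, lifting) UN_I imageE subsetI)
  then obtain P where P: "finite P" "P \<subseteq> C" "C \<subseteq> (\<Union>p\<in>P. U p)"
    by (metis finite_subset_image)
  define \<kappa> where "\<kappa> = Max (insert 1 (k ` P))"
  show ?thesis
  proof (intro exI conjI ballI)
    have "1 \<le> \<kappa>" unfolding \<kappa>_def using P(1) by (intro Max_ge) auto
    then show "\<kappa> > 0" by simp
    fix p assume "p \<in> C"
    then obtain p' where p': "p' \<in> P" "p \<in> U p'" using P(3) by blast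
    then have "f p < ereal (k p')" using Uk P(2) by blast
    also have "k p' \<le> \<kappa>" using P(1) p'(1) by (simp add: \<kappa>_def)
    finally show "f p < ereal \<kappa>" by simp
  qed
qed

subsection \<open>The group \<open>\<Gamma>\<close> and its cosets\<close>

lemma Ints_det:
  fixes A :: "'a::comm_ring_1^'m::finite^'m"
  assumes "\<And>i j. A$i$j \<in> \<int>"
  shows "det A \<in> \<int>"
  unfolding det_def by (intro Ints_sum Ints_mult Ints_prod) (auto simp: assms)

lemma mat_1_in_SLZ: "(mat 1 :: 'n::finite mat1) \<in> SLZ"
  by (simp add: SLZ_def) (simp add: mat_def)

lemma SLZ_mult: "g \<in> SLZ \<Longrightarrow> h \<in> SLZ \<Longrightarrow> g ** h \<in> SLZ"
  unfolding SLZ_def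
  by (auto simp: det_mul) (auto simp: matrix_matrix_mult_def intro!: Ints_sum Ints_mult)

lemma SLZ_inverse:
  fixes g :: "'n::finite mat1"
  assumes "g \<in> SLZ"
  obtains h where "h \<in> SLZ" "h ** g = mat 1" "g ** h = mat 1"
proof -
  have d: "det g = 1" and g_int: "\<And>i j. g$i$j \<in> \<int>" using assms by (auto simp: SLZ_def)
  then obtain B where B: "g ** B = mat 1" "B ** g = mat 1"
    using invertible_det_nz[of g] unfolding invertible_def by auto
  have "B$k$j \<in> \<int>" for k j
  proof -
    define x where "x = (\<chi> k. B$k$j)"
    define b where "b = (\<chi> i. (mat 1 :: 'n mat1)$i$j)"
    have "g *v x = b" unfolding vec_eq_iff
    proof
      fix i
      have "(g *v x)$i = (g ** B)$i$j"
        by (simp add: x_def matrix_vector_mult_def matrix_matrix_mult_def)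
      then show "(g *v x)$i = b$i" using B(1) by (simp add: b_def)
    qed
    then have "B$k$j = det (\<chi> i l. if l = k then b$i else g$i$l)"
      using cramer[of g x b] d by (simp add: x_def vec_eq_iff)
    also have "\<dots> \<in> \<int>"
      by (rule Ints_det) (auto simp: g_int b_def mat_def)
    finally show ?thesis .
  qed
  moreover have "det B = 1"
    using B d det_mul[of g B] by simp
  ultimately have "B \<in> SLZ" by (auto simp: SLZ_def)
  with B show ?thesis using that by blast
qed

lemma int_vecs_vector_matrix_mult: "v \<in> int_vecs \<Longrightarrow> g \<in> SLZ \<Longrightarrow> v v* g \<in> int_vecs"
  by (auto simp: int_vecs_def SLZ_def vector_matrix_mult_def intro!: Ints_sum Ints_mult)

lemma lattice_SLZ_mult:
  assumes "g \<in> SLZ"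
  shows "lattice (g ** M) = lattice M"
proof -
  obtain h where h: "h \<in> SLZ" "h ** g = mat 1" using SLZ_inverse assms by blast
  show ?thesis unfolding lattice_def
  proof (intro set_eqI iffI)
    fix z assume "z \<in> {split_vec (v v* (g ** M)) |v. v \<in> int_vecs}"
    then obtain v where "v \<in> int_vecs" "z = split_vec (v v* (g ** M))" by auto
    then show "z \<in> {split_vec (v v* M) |v. v \<in> int_vecs}"
      using int_vecs_vector_matrix_mult[OF _ assms] by (auto simp flip: vector_matrix_mul_assoc)
  next
    fix z assume "z \<in> {split_vec (v v* M) |v. v \<in> int_vecs}"
    then obtain v where v: "v \<in> int_vecs" "z = split_vec (v v* M)" by auto
    have "v v* M = (v v* h) v* (g ** M)"
      by (simp add: vector_matrix_mul_assoc matrix_mul_assoc h)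
    then show "z \<in> {split_vec (v v* (g ** M)) |v. v \<in> int_vecs}"
      using int_vecs_vector_matrix_mult[OF v(1) h(1)] v by auto
  qed
qed

lemma in_coset_self: "M \<in> coset M"
  unfolding coset_def using mat_1_in_SLZ by force

lemma coset_eq_if_mem:
  assumes "N \<in> coset M"
  shows "coset N = coset M"
proof -
  obtain g where g: "g \<in> SLZ" "N = g ** M" using assms by (auto simp: coset_def)
  obtain h where h: "h \<in> SLZ" "h ** g = mat 1" using SLZ_inverse g(1) by blast
  show ?thesis unfolding coset_def
  proof (intro set_eqI iffI)
    fix z assume "z \<in> {k ** N |k. k \<in> SLZ}"
    then obtain k where "k \<in> SLZ" "z = k ** N" by auto
    then show "z \<in> {k ** M |k. k \<in> SLZ}"
      using g SLZ_mult[of k g] by (auto simp: matrix_mul_assoc)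
  next
    fix z assume "z \<in> {k ** M |k. k \<in> SLZ}"
    then obtain k where k: "k \<in> SLZ" "z = k ** M" by auto
    then have "z = k ** ((h ** g) ** M)" using h by simp
    also have "\<dots> = (k ** h) ** N" using g by (simp add: matrix_mul_assoc)
    finally have "z = (k ** h) ** N" .
    then show "z \<in> {k ** N |k. k \<in> SLZ}" using SLZ_mult[OF k(1) h(1)] by auto
  qed
qed

lemma SLR_if_mem_coset:
  assumes "M \<in> SLR" "N \<in> coset M"
  shows "N \<in> SLR"
  using assms by (auto simp: coset_def SLR_def SLZ_def det_mul)

lemma Fq_coset: "Fq D (coset M, t) = Ffun D M t"
proof -
  have "(SOME N. N \<in> coset M) \<in> coset M" using in_coset_self by (rule someI)
  then obtain g where "g \<in> SLZ" "(SOME N. N \<in> coset M) = g ** M" by (auto simp: coset_def)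
  then show ?thesis by (simp add: Fq_def Ffun_def lattice_SLZ_mult)
qed

subsection \<open>The quotient topology\<close>

lemma openin_quot_top:
  "openin quot_top U \<longleftrightarrow> U \<subseteq> cosets \<and> openin (top_of_set SLR) {M \<in> SLR. coset M \<in> U}"
proof -
  define P where "P = (\<lambda>U. U \<subseteq> (cosets :: 'a mat1 set set) \<and> openin (top_of_set SLR) {M \<in> SLR. coset M \<in> U})"
  have "P (S \<inter> T)" if "P S" "P T" for S T
  proof -
    have "{M \<in> SLR. coset M \<in> S \<inter> T} = {M \<in> SLR. coset M \<in> S} \<inter> {M \<in> SLR. coset M \<in> T}" by auto
    then show ?thesis using that unfolding P_def by (auto intro: openin_Int)
  qed
  moreover have "P (\<Union>K)" if "\<forall>S\<in>K. P S" for K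
  proof -
    have "{M \<in> SLR. coset M \<in> \<Union>K} = (\<Union>S\<in>K. {M \<in> SLR. coset M \<in> S})" by auto
    then show ?thesis using that unfolding P_def by (auto intro!: openin_Union)
  qed
  ultimately have "istopology P" unfolding istopology_def by blast
  then show ?thesis unfolding quot_top_def P_def by (simp only: topology_inverse')
qed

lemma topspace_quot_top_subset: "topspace quot_top \<subseteq> cosets"
  using openin_quot_top openin_topspace by blast

lemma open_matrix_mult_left_vimage:
  fixes h :: "real^'k::finite^'l::finite"
  assumes "open A"
  shows "open {X::real^'m::finite^'k. h ** X \<in> A}"
  unfolding matrix_matrix_mult_def
  by (rule open_vimage[unfolded vimage_def, OF assms]) (intro continuous_intros continuous_on_vec_lambda)

lemma openin_quot_top_image:
  fixes A :: "'n::finite mat1 set"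
  assumes "open A"
  shows "openin quot_top (coset ` (A \<inter> SLR))"
  unfolding openin_quot_top
proof
  show "coset ` (A \<inter> SLR) \<subseteq> cosets" by (auto simp: cosets_def)
  define T where "T = (\<Union>h\<in>SLZ. {X::'n mat1. h ** X \<in> A})"
  have "open T" unfolding T_def using open_matrix_mult_left_vimage[OF assms] by blast
  have "{M \<in> SLR. coset M \<in> coset ` (A \<inter> SLR)} = SLR \<inter> T"
  proof (intro set_eqI iffI)
    fix N assume "N \<in> {M \<in> SLR. coset M \<in> coset ` (A \<inter> SLR)}"
    then obtain M where N: "N \<in> SLR" "M \<in> A" "coset N = coset M" by auto
    then have "M \<in> coset N" using in_coset_self by blast
    then obtain h where "h \<in> SLZ" "M = h ** N" by (auto simp: coset_def)
    then show "N \<in> SLR \<inter> T" using N unfolding T_def by auto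
  next
    fix N assume "N \<in> SLR \<inter> T"
    then obtain h where h: "N \<in> SLR" "h \<in> SLZ" "h ** N \<in> A" unfolding T_def by auto
    then have "h ** N \<in> coset N" by (auto simp: coset_def)
    then show "N \<in> {M \<in> SLR. coset M \<in> coset ` (A \<inter> SLR)}"
      using h coset_eq_if_mem SLR_if_mem_coset by (auto intro!: image_eqI[where x="h ** N"])
  qed
  then show "openin (top_of_set SLR) {M \<in> SLR. coset M \<in> coset ` (A \<inter> SLR)}"
    using \<open>open T\<close> by (auto simp: openin_open)
qed

lemma Fq_nbhd_if_eventually:
  assumes "M \<in> SLR" "t \<in> interior D"
    and "eventually (\<lambda>p. fst p \<in> SLR \<longrightarrow> Ffun D (fst p) (snd p) \<in> V) (nhds (M, t))"
  shows "\<exists>U. openin (prod_topology quot_top (top_of_set (interior D))) U \<and> (coset M, t) \<in> U \<and>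
             (\<forall>q\<in>U. Fq D q \<in> V)"
proof -
  obtain S where S: "open S" "(M, t) \<in> S" "\<forall>p\<in>S. fst p \<in> SLR \<longrightarrow> Ffun D (fst p) (snd p) \<in> V"
    using assms(3) unfolding eventually_nhds by blast
  obtain A B where AB: "open A" "open B" "(M, t) \<in> A \<times> B" "A \<times> B \<subseteq> S"
    using open_prod_elim[OF S(1,2)] by blast
  show ?thesis
  proof (intro exI conjI ballI)
    have "openin (top_of_set (interior D)) (B \<inter> interior D)"
      using AB(2) by (auto simp: openin_open)
    then show "openin (prod_topology quot_top (top_of_set (interior D)))
                 (coset ` (A \<inter> SLR) \<times> (B \<inter> interior D))"
      using openin_quot_top_image[OF AB(1)] by (simp add: openin_prod_Times_iff)
    show "(coset M, t) \<in> coset ` (A \<inter> SLR) \<times> (B \<inter> interior D)"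
      using assms AB by auto
    fix q assume "q \<in> coset ` (A \<inter> SLR) \<times> (B \<inter> interior D)"
    then obtain M' t' where q: "q = (coset M', t')" "M' \<in> A \<inter> SLR" "t' \<in> B" by auto
    then have "(M', t') \<in> S" using AB(4) by blast
    with q S(3) show "Fq D q \<in> V" by (auto simp: Fq_coset)
  qed
qed

subsection \<open>Integer vectors with bounded image\<close>

lemma finite_Ints_box:
  "finite {v::real^'m::finite. (\<forall>i. v$i \<in> \<int>) \<and> (\<forall>i. \<bar>v$i\<bar> \<le> C)}"
proof -
  let ?P = "PiE UNIV (\<lambda>_::'m. {-\<lceil>C\<rceil>..\<lceil>C\<rceil>})"
  have "{v::real^'m. (\<forall>i. v$i \<in> \<int>) \<and> (\<forall>i. \<bar>v$i\<bar> \<le> C)} \<subseteq> (\<lambda>f. \<chi> i. of_int (f i)) ` ?P"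
  proof
    fix v :: "real^'m" assume v: "v \<in> {v. (\<forall>i. v$i \<in> \<int>) \<and> (\<forall>i. \<bar>v$i\<bar> \<le> C)}"
    have floor_eq: "of_int \<lfloor>v$i\<rfloor> = v$i" for i using v by (auto elim: Ints_cases)
    have "\<bar>\<lfloor>v$i\<rfloor>\<bar> \<le> \<lceil>C\<rceil>" for i
    proof -
      have "of_int \<bar>\<lfloor>v$i\<rfloor>\<bar> \<le> C" using v floor_eq[of i] by simp
      then show ?thesis unfolding le_ceiling_iff by linarith
    qed
    then have "(\<lambda>i. \<lfloor>v$i\<rfloor>) \<in> ?P" by (auto simp: PiE_iff abs_le_iff minus_le_iff)
    moreover have "v = (\<chi> i. of_int \<lfloor>v$i\<rfloor>)" by (simp add: vec_eq_iff floor_eq)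
    ultimately show "v \<in> (\<lambda>f. \<chi> i. of_int (f i)) ` ?P"
      by - (rule rev_image_eqI, assumption, simp)
  qed
  moreover have "finite ?P" by (rule finite_PiE) auto
  ultimately show ?thesis using finite_subset by blast
qed

lemma abs_vector_matrix_mult_le:
  fixes w :: "real^'m::finite" and A :: "real^'k::finite^'m"
  assumes "\<And>j. \<bar>w$j\<bar> \<le> B"
  shows "\<bar>(w v* A)$i\<bar> \<le> B * (\<Sum>j\<in>UNIV. \<bar>A$j$i\<bar>)"
proof -
  have "\<bar>(w v* A)$i\<bar> = \<bar>\<Sum>j\<in>UNIV. w$j * A$j$i\<bar>"
    by (simp add: vector_matrix_mult_def)
  also have "\<dots> \<le> (\<Sum>j\<in>UNIV. \<bar>w$j\<bar> * \<bar>A$j$i\<bar>)"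
    by (rule order_trans[OF sum_abs]) (simp add: abs_mult)
  also have "\<dots> \<le> (\<Sum>j\<in>UNIV. B * \<bar>A$j$i\<bar>)"
    by (rule sum_mono) (use assms in \<open>auto intro: mult_right_mono\<close>)
  finally show ?thesis by (simp add: sum_distrib_left)
qed

lemma abs_column_sum_le:
  fixes A :: "real^'k::finite^'m::finite"
  shows "(\<Sum>j\<in>UNIV. \<bar>A$j$i\<bar>) \<le> (\<Sum>i\<in>UNIV. \<Sum>j\<in>UNIV. \<bar>A$j$i\<bar>)"
  by (rule member_le_sum[where f="\<lambda>i. \<Sum>j\<in>UNIV. \<bar>A$j$i\<bar>"]) (auto intro: sum_nonneg)

lemma abs_entry_diff_le_dist:
  fixes M M' :: "real^'m::finite^'k::finite"
  shows "\<bar>M$j$k - M'$j$k\<bar> \<le> dist M M'"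
proof -
  have "\<bar>(M - M')$j$k\<bar> \<le> norm ((M - M')$j)" by (rule component_le_norm_cart)
  also have "\<dots> \<le> norm (M - M')" by (rule Finite_Cartesian_Product.norm_nth_le)
  finally show ?thesis by (simp add: dist_norm)
qed

text \<open>With \<open>v = (v v* M') v* M\<^sup>-\<^sup>1 + (v v* (M - M')) v* M\<^sup>-\<^sup>1\<close>, the second term has sup-norm
  at most half that of \<open>v\<close>, so it is absorbed into the left-hand side.\<close>

lemma abs_components_le_perturbed:
  fixes M M' Mi :: "real^'m::finite^'m"
  assumes Mi: "M ** Mi = mat 1" and K: "\<And>i. (\<Sum>k\<in>UNIV. \<bar>Mi$k$i\<bar>) \<le> K"
    and close: "\<And>j k. \<bar>M$j$k - M'$j$k\<bar> \<le> \<delta>" and small: "real CARD('m) * \<delta> * K \<le> 1 / 2"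
    and b: "\<And>j. \<bar>(v v* M')$j\<bar> \<le> b"
  shows "\<bar>v$i\<bar> \<le> 2 * K * b"
proof -
  define n where "n = real CARD('m)"
  have "b \<ge> 0" using b[of undefined] by linarith
  have "\<delta> \<ge> 0" using close[of undefined undefined] by linarith
  have "K \<ge> 0" using K[of undefined] by (meson abs_ge_zero order_trans sum_nonneg)
  define m where "m = Max (range (\<lambda>i. \<bar>v$i\<bar>))"
  have m: "\<bar>v$i\<bar> \<le> m" for i unfolding m_def by (rule Max_ge) auto
  have "m \<in> range (\<lambda>i. \<bar>v$i\<bar>)" unfolding m_def by (rule Max_in) auto
  then obtain i0 where i0: "m = \<bar>v$i0\<bar>" by auto
  have "m \<ge> 0" using i0 by simp
  have "v = (v v* M) v* Mi" by (simp add: vector_matrix_mul_assoc Mi)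
  also have "\<dots> = (v v* M' + v v* (M - M')) v* Mi"
    by (simp add: vector_matrix_mult_diff_rdistrib)
  also have "\<dots> = (v v* M') v* Mi + (v v* (M - M')) v* Mi"
    by (rule vector_matrix_left_distrib)
  finally have v_eq: "v = (v v* M') v* Mi + (v v* (M - M')) v* Mi" .
  have col: "(\<Sum>j\<in>UNIV. \<bar>(M - M')$j$k\<bar>) \<le> n * \<delta>" for k
    using sum_bounded_above[of UNIV "\<lambda>j. \<bar>(M - M')$j$k\<bar>" \<delta>] close by (simp add: n_def)
  have "\<bar>(v v* (M - M'))$k\<bar> \<le> m * (n * \<delta>)" for k
    using abs_vector_matrix_mult_le[of v m "M - M'" k, OF m] mult_left_mono[OF col[of k] \<open>m \<ge> 0\<close>]
    by linarith
  then have err: "\<bar>((v v* (M - M')) v* Mi)$i\<bar> \<le> m * (n * \<delta>) * K" for i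
    using abs_vector_matrix_mult_le[of "v v* (M - M')" "m * (n * \<delta>)" Mi i]
      mult_left_mono[OF K[of i], of "m * (n * \<delta>)"] \<open>m \<ge> 0\<close> \<open>\<delta> \<ge> 0\<close>
    by (simp add: n_def)
  have main: "\<bar>((v v* M') v* Mi)$i\<bar> \<le> b * K" for i
    using abs_vector_matrix_mult_le[of "v v* M'" b Mi i, OF b] mult_left_mono[OF K[of i] \<open>b \<ge> 0\<close>]
    by linarith
  have half: "m * (n * \<delta>) * K \<le> m / 2"
    using mult_left_mono[OF small \<open>m \<ge> 0\<close>] by (simp add: n_def algebra_simps)
  have split: "\<bar>v$i\<bar> \<le> \<bar>((v v* M') v* Mi)$i\<bar> + \<bar>((v v* (M - M')) v* Mi)$i\<bar>" for i
    by (subst v_eq) simp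
  have "\<bar>v$i\<bar> \<le> b * K + m / 2" for i
    using split[of i] main[of i] err[of i] half by linarith
  from this[of i0] have "m \<le> 2 * (b * K)" using i0 by linarith
  then show ?thesis using m[of i] by (simp add: ac_simps)
qed

lemma abs_components_le_near_invertible:
  fixes M :: "real^'m::finite^'m"
  assumes "det M \<noteq> 0"
  obtains \<delta> c where "\<delta> > 0"
    and "\<And>M' v b i. dist M' M < \<delta> \<Longrightarrow> (\<And>j. \<bar>(v v* M')$j\<bar> \<le> b) \<Longrightarrow> \<bar>v$i\<bar> \<le> c * b"
proof -
  obtain Mi where Mi: "M ** Mi = mat 1"
    using assms invertible_det_nz[of M] unfolding invertible_def by auto
  define K where "K = (\<Sum>i\<in>UNIV. \<Sum>k\<in>UNIV. \<bar>Mi$k$i\<bar>) + 1"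
  have K: "(\<Sum>k\<in>UNIV. \<bar>Mi$k$i\<bar>) \<le> K" for i
    using abs_column_sum_le[of Mi i] by (simp add: K_def)
  have "0 \<le> (\<Sum>i\<in>UNIV. \<Sum>k\<in>UNIV. \<bar>Mi$k$i\<bar>)" by (intro sum_nonneg) simp
  then have "K > 0" by (simp add: K_def)
  define \<delta> where "\<delta> = 1 / (2 * real CARD('m) * K)"
  have "\<delta> > 0" using \<open>K > 0\<close> by (simp add: \<delta>_def)
  moreover have "\<bar>v$i\<bar> \<le> 2 * K * b"
    if "dist M' M < \<delta>" "\<And>j. \<bar>(v v* M')$j\<bar> \<le> b" for M' v b i
  proof (rule abs_components_le_perturbed[OF Mi K _ _ that(2)])
    show "\<bar>M$j$k - M'$j$k\<bar> \<le> \<delta>" for j k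
      using abs_entry_diff_le_dist[of M j k M'] that(1) by (simp add: dist_commute)
    show "real CARD('m) * \<delta> * K \<le> 1 / 2" using \<open>K > 0\<close> by (simp add: \<delta>_def)
  qed
  ultimately show thesis using that by blast
qed

lemma finite_int_vectors_bounded_image:
  fixes M :: "real^'m::finite^'m"
  assumes "det M \<noteq> 0"
  shows "finite {v. (\<forall>i. v$i \<in> \<int>) \<and> (\<forall>j. \<bar>(v v* M)$j\<bar> \<le> B)}"
proof -
  obtain \<delta> c where "\<delta> > 0"
    and c: "\<And>M' v b i. dist M' M < \<delta> \<Longrightarrow> (\<And>j. \<bar>(v v* M')$j\<bar> \<le> b) \<Longrightarrow> \<bar>v$i\<bar> \<le> c * b"
    using abs_components_le_near_invertible[OF assms] by blast
  then have "\<bar>v$i\<bar> \<le> c * B" if "\<forall>j. \<bar>(v v* M)$j\<bar> \<le> B" for v i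
    using c[of M v B i] that by simp
  then have "{v. (\<forall>i. v$i \<in> \<int>) \<and> (\<forall>j. \<bar>(v v* M)$j\<bar> \<le> B)}
      \<subseteq> {v. (\<forall>i. v$i \<in> \<int>) \<and> (\<forall>i. \<bar>v$i\<bar> \<le> c * B)}"
    by auto
  then show ?thesis using finite_Ints_box finite_subset by blast
qed

definition heights :: "(real ^ 'n::finite) set \<Rightarrow> 'n mat1 \<Rightarrow> real ^ 'n \<Rightarrow> real set" where
  "heights D M t = {y. y > 0 \<and> (\<exists>x. (x, y) \<in> lattice M \<and> x + t \<in> D)}"

lemma mem_heights_iff:
  "y \<in> heights D M t \<longleftrightarrow>
     (\<exists>v\<in>int_vecs. (v v* M)$None = y \<and> 0 < y \<and> fst (split_vec (v v* M)) + t \<in> D)"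
  unfolding heights_def lattice_def split_vec_def by auto

lemma Ffun_eq_least:
  assumes "y \<in> heights D M t" "\<forall>z\<in>heights D M t. y \<le> z"
  shows "Ffun D M t = ereal y"
proof -
  have "(THE y. y \<in> heights D M t \<and> (\<forall>z\<in>heights D M t. y \<le> z)) = y"
    using assms by (intro the_equality) (auto intro: antisym)
  then show ?thesis using assms unfolding Ffun_def heights_def[symmetric] Let_def by auto
qed

lemma Ffun_finiteE:
  assumes "Ffun D M t \<noteq> \<infinity>"
  obtains y where "y \<in> heights D M t" "\<forall>z\<in>heights D M t. y \<le> z" "Ffun D M t = ereal y"
proof -
  have "\<exists>y\<in>heights D M t. \<forall>z\<in>heights D M t. y \<le> z"
    using assms unfolding Ffun_def heights_def[symmetric] Let_def by (auto split: if_splits)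
  then show ?thesis using that Ffun_eq_least by blast
qed

lemma abs_lattice_coords_le:
  fixes w :: "real^'n::finite option"
  assumes "\<forall>x\<in>D. norm x \<le> a" "fst (split_vec w) + t \<in> D"
  shows "\<bar>w$j\<bar> \<le> a + norm t + \<bar>w$None\<bar>"
proof -
  have a: "norm (fst (split_vec w) + t) \<le> a" using assms by blast
  show ?thesis
  proof (cases j)
    case None
    have "0 \<le> a + norm t" using a norm_ge_zero[of "fst (split_vec w) + t"] norm_ge_zero[of t] by linarith
    then show ?thesis by (simp add: None)
  next
    case (Some i)
    have "\<bar>w$Some i\<bar> \<le> norm (fst (split_vec w))"
      using component_le_norm_cart[of "fst (split_vec w)" i] by (simp add: split_vec_def)
    also have "\<dots> \<le> norm (fst (split_vec w) + t) + norm t"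
      by (metis add_diff_cancel norm_triangle_ineq4)
    finally show ?thesis using a Some by simp
  qed
qed

lemma Ffun_attained:
  fixes M :: "'n::finite mat1"
  assumes "det M \<noteq> 0" "bounded D" "y \<in> heights D M t"
  obtains y0 where "y0 \<in> heights D M t" "y0 \<le> y" "Ffun D M t = ereal y0"
proof -
  obtain a where a: "\<forall>x\<in>D. norm x \<le> a" using assms(2) bounded_iff by blast
  define H where "H = heights D M t \<inter> {..y}"
  have "H \<subseteq> (\<lambda>v. (v v* M)$None) ` {v. (\<forall>i. v$i \<in> \<int>) \<and> (\<forall>j. \<bar>(v v* M)$j\<bar> \<le> a + norm t + y)}"
  proof
    fix z assume "z \<in> H"
    then have "z \<in> heights D M t" "z \<le> y" by (auto simp: H_def)
    then obtain v where v: "v \<in> int_vecs" "(v v* M)$None = z" "0 < z"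
      "fst (split_vec (v v* M)) + t \<in> D"
      unfolding mem_heights_iff by blast
    then have "\<bar>(v v* M)$j\<bar> \<le> a + norm t + y" for j
      using abs_lattice_coords_le[OF a v(4), of j] \<open>z \<le> y\<close> by simp
    with v show "z \<in> (\<lambda>v. (v v* M)$None) ` {v. (\<forall>i. v$i \<in> \<int>) \<and> (\<forall>j. \<bar>(v v* M)$j\<bar> \<le> a + norm t + y)}"
      by (force simp: int_vecs_def)
  qed
  then have "finite H"
    using finite_int_vectors_bounded_image[OF assms(1)] finite_surj by blast
  have "y \<in> H" using assms(3) by (simp add: H_def)
  have least: "Min H \<le> z" if "z \<in> heights D M t" for z
  proof (cases "z \<le> y")
    case True
    then show ?thesis using that \<open>finite H\<close> by (intro Min_le) (auto simp: H_def)
  next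
    case False
    then show ?thesis using Min_le[OF \<open>finite H\<close> \<open>y \<in> H\<close>] by simp
  qed
  have "Min H \<in> H" using \<open>finite H\<close> \<open>y \<in> H\<close> by (intro Min_in) auto
  then show ?thesis
    using that[of "Min H"] Ffun_eq_least[of "Min H" D M t] least by (simp add: H_def)
qed

subsection \<open>Lattice points of positive height above a small horizontal ball\<close>

lemma Dirichlet_approx_vec:
  fixes u :: "real^'m::finite" and N :: nat
  assumes "N > 0"
  obtains q :: int and v :: "real^'m"
  where "q > 0" "\<And>k. v$k \<in> \<int>" "\<And>k. \<bar>v$k - of_int q * u$k\<bar> < 1 / N"
proof -
  define n where "n = CARD('m)"
  obtain e where e: "bij_betw e {0..<n} (UNIV :: 'm set)"
    using ex_bij_betw_nat_finite[of "UNIV :: 'm set"] unfolding n_def by auto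
  obtain q p where qp: "0 < q" "\<And>i. i < n \<Longrightarrow> \<bar>of_int q * (u $ e i) - of_int (p i)\<bar> < 1 / N"
    using Dirichlet_approx_simult[OF assms, where \<theta>="\<lambda>i. u $ e i" and n=n] by blast
  define v :: "real^'m" where "v = (\<chi> k. of_int (p (inv_into {0..<n} e k)))"
  have "\<bar>v$k - of_int q * u$k\<bar> < 1 / N" for k
  proof -
    define i where "i = inv_into {0..<n} e k"
    have "k \<in> e ` {0..<n}" using e by (auto simp: bij_betw_def)
    then have "i < n" "e i = k"
      unfolding i_def using inv_into_into[of k e "{0..<n}"] f_inv_into_f[of k e "{0..<n}"] by auto
    moreover have "v$k = of_int (p i)" by (simp add: v_def i_def)
    ultimately show ?thesis using qp(2)[of i] by (simp add: abs_minus_commute)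
  qed
  moreover have "v$k \<in> \<int>" for k by (simp add: v_def)
  ultimately show ?thesis using that qp(1) by blast
qed

lemma exists_lattice_vector_narrow:
  fixes M :: "'n::finite mat1"
  assumes "det M \<noteq> 0" "r > 0"
  obtains v where "v \<in> int_vecs" "0 < (v v* M)$None" "\<And>i. \<bar>(v v* M)$Some i\<bar> < r"
proof -
  obtain Mi where Mi: "Mi ** M = mat 1"
    using assms invertible_det_nz[of M] unfolding invertible_def by auto
  define u where "u = (\<chi> k. Mi$None$k)"
  have uM: "(u v* M)$j = (if j = None then 1 else 0)" for j
  proof -
    have "(u v* M)$j = (Mi ** M)$None$j"
      by (simp add: u_def vector_matrix_mult_def matrix_matrix_mult_def)
    then show ?thesis using Mi by (simp add: mat_def)
  qed
  define K where "K = (\<Sum>j\<in>UNIV. \<Sum>k\<in>UNIV. \<bar>M$k$j\<bar>) + 1"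
  have K: "(\<Sum>k\<in>UNIV. \<bar>M$k$j\<bar>) \<le> K" for j
    using abs_column_sum_le[of M j] by (simp add: K_def)
  define N :: nat where "N = nat \<lceil>K / min 1 r\<rceil> + 1"
  have "N > 0" by (simp add: N_def)
  have "0 < min 1 r" using assms(2) by simp
  have "K / min 1 r < N" unfolding N_def by linarith
  then have "K < N * min 1 r" using \<open>0 < min 1 r\<close> by (simp add: pos_divide_less_eq)
  then have KN: "K / N < min 1 r"
    using \<open>N > 0\<close> by (metis mult.commute of_nat_0_less_iff pos_divide_less_eq)
  obtain q :: int and v
    where qv: "q > 0" "\<And>k. v$k \<in> \<int>" "\<And>k. \<bar>v$k - of_int q * u$k\<bar> < 1 / N"
    using Dirichlet_approx_vec[OF \<open>N > 0\<close>, of u] by blast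
  define w where "w = v - of_int q *\<^sub>R u"
  have w_small: "\<bar>(w v* M)$j\<bar> < min 1 r" for j
  proof -
    have "\<bar>(w v* M)$j\<bar> \<le> 1 / N * (\<Sum>k\<in>UNIV. \<bar>M$k$j\<bar>)"
      by (rule abs_vector_matrix_mult_le) (use qv(3) in \<open>simp add: w_def less_imp_le\<close>)
    also have "\<dots> \<le> 1 / N * K" by (rule mult_left_mono[OF K]) simp
    finally show ?thesis using KN by simp
  qed
  have v_eq: "(v v* M)$j = (w v* M)$j + of_int q * (u v* M)$j" for j
    by (simp add: w_def vector_matrix_mult_def algebra_simps sum.distrib sum_distrib_left sum_subtractf)
  show thesis
  proof (rule that)
    show "v \<in> int_vecs" using qv(2) by (simp add: int_vecs_def)
    have "1 \<le> real_of_int q" using qv(1) by simp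
    moreover have "-1 < (w v* M)$None" using w_small[of None] by (simp add: abs_less_iff)
    moreover have "(v v* M)$None = (w v* M)$None + real_of_int q"
      using v_eq[of None] uM[of None] by simp
    ultimately show "0 < (v v* M)$None" by linarith
    show "\<bar>(v v* M)$Some i\<bar> < r" for i
      using v_eq[of "Some i"] uM[of "Some i"] w_small[of "Some i"] by simp
  qed
qed

subsection \<open>Perturbing \<open>(M, t)\<close>\<close>

lemma mem_interior_shifted_box:
  fixes t :: "'a::real_normed_vector" and \<kappa> :: real
  shows "z \<in> interior ((\<lambda>x. x - t) ` D \<times> {0..\<kappa>}) \<longleftrightarrow> fst z + t \<in> interior D \<and> 0 < snd z \<and> snd z < \<kappa>"
  by (cases z) (auto simp: interior_Times interior_translation_subtract image_iff eq_diff_eq)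

lemma tendsto_fst_snd_nhds:
  shows "(fst \<longlongrightarrow> a) (nhds (a, b))" and "(snd \<longlongrightarrow> b) (nhds (a, b))"
  using tendsto_fst[OF filterlim_ident, of "(a, b)"] tendsto_snd[OF filterlim_ident, of "(a, b)"]
  by simp_all

lemma split_vec_mult_eq_0_iff:
  fixes M :: "'n::finite mat1"
  assumes "det M \<noteq> 0"
  shows "split_vec (v v* M) = 0 \<longleftrightarrow> v = 0"
proof
  assume "split_vec (v v* M) = 0"
  then have "(v v* M)$j = 0" for j
    by (cases j) (auto simp: split_vec_def zero_prod_def vec_eq_iff)
  moreover obtain Mi where "M ** Mi = mat 1"
    using assms invertible_det_nz[of M] unfolding invertible_def by auto
  ultimately have "v = 0 v* Mi"
    by (metis vec_eq_iff vector_matrix_mul_assoc vector_matrix_mul_rid zero_index)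
  then show "v = 0" by simp
next
  assume "v = 0"
  then have "v v* M = 0" by simp
  then show "split_vec (v v* M) = 0" by (simp add: split_vec_def zero_prod_def vec_eq_iff)
qed

lemma tendsto_split_vec_mult:
  fixes M :: "'n::finite mat1"
  assumes "(f \<longlongrightarrow> M) F"
  shows "((\<lambda>x. split_vec (v v* f x)) \<longlongrightarrow> split_vec (v v* M)) F"
  unfolding split_vec_def vector_matrix_mult_def
  by (intro tendsto_intros tendsto_vec_lambda tendsto_vec_nth assms)

lemma eventually_Ffun_less:
  fixes M :: "'n::finite mat1" and t :: "real^'n"
  assumes "bounded D" "v \<in> int_vecs" "fst (split_vec (v v* M)) + t \<in> interior D"
    and "0 < (v v* M)$None" "(v v* M)$None < y"
  shows "eventually (\<lambda>p. det (fst p) \<noteq> 0 \<longrightarrow> Ffun D (fst p) (snd p) < ereal y) (nhds (M, t))"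
proof -
  let ?g = "\<lambda>p. (fst (split_vec (v v* fst p)) + snd p, snd (split_vec (v v* fst p)))"
  have lim: "((\<lambda>p. split_vec (v v* fst p)) \<longlongrightarrow> split_vec (v v* M)) (nhds (M, t))"
    by (rule tendsto_split_vec_mult[OF tendsto_fst_snd_nhds(1)])
  have "(?g \<longlongrightarrow> (fst (split_vec (v v* M)) + t, snd (split_vec (v v* M)))) (nhds (M, t))"
    by (intro tendsto_Pair tendsto_add tendsto_fst[OF lim] tendsto_snd[OF lim] tendsto_fst_snd_nhds(2))
  moreover have "open (interior D \<times> {0<..<y})" by (simp add: open_Times)
  moreover have "(fst (split_vec (v v* M)) + t, snd (split_vec (v v* M))) \<in> interior D \<times> {0<..<y}"
    using assms(3-5) by (simp add: split_vec_def)
  ultimately have "eventually (\<lambda>p. ?g p \<in> interior D \<times> {0<..<y}) (nhds (M, t))"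
    by (rule topological_tendstoD)
  then show ?thesis
  proof (rule eventually_mono)
    fix p assume p: "?g p \<in> interior D \<times> {0<..<y}"
    show "det (fst p) \<noteq> 0 \<longrightarrow> Ffun D (fst p) (snd p) < ereal y"
    proof
      assume "det (fst p) \<noteq> 0"
      have "(v v* fst p)$None \<in> heights D (fst p) (snd p)"
        using p assms(2) interior_subset unfolding mem_heights_iff
        by (intro bexI[of _ v]) (auto simp: split_vec_def)
      then obtain y0 where "y0 \<le> (v v* fst p)$None" "Ffun D (fst p) (snd p) = ereal y0"
        using Ffun_attained[OF \<open>det (fst p) \<noteq> 0\<close> assms(1)] by blast
      then show "Ffun D (fst p) (snd p) < ereal y" using p by (simp add: split_vec_def)
    qed
  qed
qed

lemma eventually_height_above:
  fixes M :: "'n::finite mat1" and t :: "real^'n"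
  assumes "det M \<noteq> 0" "v \<in> int_vecs"
    and no_boundary: "(lattice M - {0}) \<inter> frontier ((\<lambda>x. x - t) ` D \<times> {0..\<kappa>}) = {}"
    and below: "\<forall>z\<in>heights D M t. l < z"
  shows "eventually (\<lambda>p. 0 < (v v* fst p)$None \<and> fst (split_vec (v v* fst p)) + snd p \<in> D \<and>
      (v v* fst p)$None \<le> \<kappa> \<longrightarrow> l < (v v* fst p)$None) (nhds (M, t))"
proof -
  define K where "K = (\<lambda>x. x - t) ` D \<times> {0..\<kappa>}"
  define w where "w = split_vec (v v* M)"
  let ?\<phi> = "\<lambda>p. (fst (split_vec (v v* fst p)) + (snd p - t), (v v* fst p)$None)"
  have lim: "((\<lambda>p. split_vec (v v* fst p)) \<longlongrightarrow> w) (nhds (M, t))"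
    unfolding w_def by (rule tendsto_split_vec_mult[OF tendsto_fst_snd_nhds(1)])
  then have lim_height: "((\<lambda>p. (v v* fst p)$None) \<longlongrightarrow> (v v* M)$None) (nhds (M, t))"
    using tendsto_snd[OF lim] by (simp add: w_def split_vec_def)
  have "(?\<phi> \<longlongrightarrow> (fst w + (t - t), snd w)) (nhds (M, t))"
    using tendsto_snd[OF lim]
    by (intro tendsto_Pair tendsto_add tendsto_diff tendsto_fst[OF lim] tendsto_fst_snd_nhds(2)
        tendsto_const) (simp_all add: split_vec_def)
  then have lim_\<phi>: "(?\<phi> \<longlongrightarrow> w) (nhds (M, t))" by simp
  have \<phi>_in_K: "?\<phi> p \<in> K"
    if "0 < (v v* fst p)$None" "fst (split_vec (v v* fst p)) + snd p \<in> D" "(v v* fst p)$None \<le> \<kappa>" for p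
  proof -
    have "fst (split_vec (v v* fst p)) + (snd p - t) \<in> (\<lambda>x. x - t) ` D"
      using that(2) by (auto intro!: image_eqI[where x = "fst (split_vec (v v* fst p)) + snd p"])
    then show ?thesis using that unfolding K_def by simp
  qed
  show ?thesis
  proof (cases "v = 0")
    case True
    then show ?thesis by simp
  next
    case False
    have "w \<noteq> 0" using False split_vec_mult_eq_0_iff[OF assms(1)] by (simp add: w_def)
    moreover have "w \<in> lattice M" using assms(2) unfolding w_def lattice_def by blast
    ultimately have "w \<notin> frontier K" using no_boundary unfolding K_def by blast
    then consider "w \<in> interior K" | "w \<notin> closure K" by (auto simp: frontier_def)
    then show ?thesis
    proof cases
      case 1
      then have "(v v* M)$None \<in> heights D M t"
        using assms(2) interior_subset unfolding K_def mem_interior_shifted_box mem_heights_iff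
        by (intro bexI[of _ v]) (auto simp: w_def split_vec_def)
      then have "eventually (\<lambda>p. l < (v v* fst p)$None) (nhds (M, t))"
        using below by (intro order_tendstoD(1)[OF lim_height]) blast
      then show ?thesis by (rule eventually_mono) simp
    next
      case 2
      then have "eventually (\<lambda>p. ?\<phi> p \<in> - closure K) (nhds (M, t))"
        by (intro topological_tendstoD[OF lim_\<phi>]) auto
      then show ?thesis by (rule eventually_mono) (use \<phi>_in_K closure_subset in blast)
    qed
  qed
qed

lemma eventually_heights_above:
  fixes M :: "'n::finite mat1" and t :: "real^'n"
  assumes "bounded D" "det M \<noteq> 0"
    and no_boundary: "(lattice M - {0}) \<inter> frontier ((\<lambda>x. x - t) ` D \<times> {0..\<kappa>}) = {}"
    and below: "\<forall>z\<in>heights D M t. l < z"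
  shows "eventually (\<lambda>p. \<forall>z\<in>heights D (fst p) (snd p). z \<le> \<kappa> \<longrightarrow> l < z) (nhds (M, t))"
proof -
  obtain \<delta> c where "\<delta> > 0"
    and c: "\<And>M' v b i. dist M' M < \<delta> \<Longrightarrow> (\<And>j. \<bar>(v v* M')$j\<bar> \<le> b) \<Longrightarrow> \<bar>v$i\<bar> \<le> c * b"
    using abs_components_le_near_invertible[OF assms(2)] by blast
  obtain a where a: "\<forall>x\<in>D. norm x \<le> a" using assms(1) bounded_iff by blast
  define b where "b = a + (norm t + 1) + \<kappa>"
  define V :: "(real^'n option) set" where "V = {v \<in> int_vecs. \<forall>i. \<bar>v$i\<bar> \<le> c * b}"
  have "finite V"
    using finite_Ints_box[of "c * b"] by (rule finite_subset[rotated]) (auto simp: V_def int_vecs_def)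
  then have "eventually (\<lambda>p. \<forall>v\<in>V. 0 < (v v* fst p)$None \<and> fst (split_vec (v v* fst p)) + snd p \<in> D \<and>
      (v v* fst p)$None \<le> \<kappa> \<longrightarrow> l < (v v* fst p)$None) (nhds (M, t))"
    by (rule eventually_ball_finite)
      (use eventually_height_above[OF assms(2) _ no_boundary below] in \<open>auto simp: V_def\<close>)
  moreover have "eventually (\<lambda>p. dist p (M, t) < min \<delta> 1) (nhds (M, t))"
    unfolding eventually_nhds_metric using \<open>\<delta> > 0\<close> by (intro exI[of _ "min \<delta> 1"]) auto
  ultimately show ?thesis
  proof eventually_elim
    case (elim p)
    obtain M' t' where p: "p = (M', t')" by (cases p)
    have "dist M' M < \<delta>" "dist t' t < 1"
      using elim(2) dist_fst_le[of p "(M, t)"] dist_snd_le[of p "(M, t)"] p by auto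
    show ?case
    proof (intro ballI impI)
      fix z assume "z \<in> heights D (fst p) (snd p)" "z \<le> \<kappa>"
      then obtain v where v: "v \<in> int_vecs" "(v v* M')$None = z" "0 < z"
        "fst (split_vec (v v* M')) + t' \<in> D"
        unfolding mem_heights_iff p by auto
      have "norm t' \<le> norm t + 1"
        using \<open>dist t' t < 1\<close> norm_triangle_ineq2[of t' t] by (simp add: dist_norm)
      then have bounded_coords: "\<bar>(v v* M')$j\<bar> \<le> b" for j
        using abs_lattice_coords_le[OF a v(4), of j] v(2,3) \<open>z \<le> \<kappa>\<close> unfolding b_def by simp
      have "v \<in> V" using c[OF \<open>dist M' M < \<delta>\<close> bounded_coords] v(1) by (simp add: V_def)
      then show "l < z" using elim(1) v p \<open>z \<le> \<kappa>\<close> by auto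
    qed
  qed
qed

lemma eventually_Ffun_near:
  fixes M :: "'n::finite mat1" and t :: "real^'n"
  assumes "bounded D" "det M \<noteq> 0" "Ffun D M t = ereal y0" "y0 < \<kappa>"
    and no_boundary: "(lattice M - {0}) \<inter> frontier ((\<lambda>x. x - t) ` D \<times> {0..\<kappa>}) = {}"
    and "\<epsilon> > 0"
  shows "eventually (\<lambda>p. det (fst p) \<noteq> 0 \<longrightarrow>
           (\<exists>y. Ffun D (fst p) (snd p) = ereal y \<and> \<bar>y - y0\<bar> < \<epsilon>)) (nhds (M, t))"
proof -
  have y0: "y0 \<in> heights D M t" "\<forall>z\<in>heights D M t. y0 \<le> z"
    using Ffun_finiteE[of D M t] assms(3) by auto
  then obtain v0 where v0: "v0 \<in> int_vecs" "(v0 v* M)$None = y0" "0 < y0"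
    "fst (split_vec (v0 v* M)) + t \<in> D"
    unfolding mem_heights_iff by blast
  define e where "e = min \<epsilon> (\<kappa> - y0)"
  have e: "0 < e" "e \<le> \<epsilon>" "y0 + e \<le> \<kappa>" using assms(4,6) by (auto simp: e_def)
  define K where "K = (\<lambda>x. x - t) ` D \<times> {0..\<kappa>}"
  have "fst (split_vec (v0 v* M)) \<in> (\<lambda>x. x - t) ` D"
    using v0(4) by (auto intro!: image_eqI[where x = "fst (split_vec (v0 v* M)) + t"])
  then have "split_vec (v0 v* M) \<in> K"
    using v0(2,3) assms(4) unfolding K_def by (simp add: mem_Times_iff split_vec_def)
  moreover have "split_vec (v0 v* M) \<notin> frontier K"
    using v0(1-3) no_boundary unfolding K_def by (auto simp: lattice_def split_vec_def zero_prod_def)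
  ultimately have "split_vec (v0 v* M) \<in> interior K"
    using closure_subset by (auto simp: frontier_def)
  then have "fst (split_vec (v0 v* M)) + t \<in> interior D"
    unfolding K_def mem_interior_shifted_box by blast
  then have "eventually (\<lambda>p. det (fst p) \<noteq> 0 \<longrightarrow> Ffun D (fst p) (snd p) < ereal (y0 + e)) (nhds (M, t))"
    by (rule eventually_Ffun_less[OF assms(1) v0(1)]) (use v0 e in auto)
  moreover have "eventually (\<lambda>p. \<forall>z\<in>heights D (fst p) (snd p). z \<le> \<kappa> \<longrightarrow> y0 - e < z) (nhds (M, t))"
    by (rule eventually_heights_above[OF assms(1,2) no_boundary]) (use y0 e in force)
  ultimately show ?thesis
  proof eventually_elim
    case (elim p)
    show ?case
    proof
      assume "det (fst p) \<noteq> 0"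
      with elim(1) have less: "Ffun D (fst p) (snd p) < ereal (y0 + e)" by blast
      then have "Ffun D (fst p) (snd p) \<noteq> \<infinity>" by auto
      then obtain y where y: "y \<in> heights D (fst p) (snd p)" "Ffun D (fst p) (snd p) = ereal y"
        by (blast elim: Ffun_finiteE)
      with less have "y < y0 + e" by simp
      moreover have "y0 - e < y" using elim(2) y(1) \<open>y < y0 + e\<close> e(3) by force
      ultimately show "\<exists>y. Ffun D (fst p) (snd p) = ereal y \<and> \<bar>y - y0\<bar> < \<epsilon>"
        using y(2) e(2) by (intro exI[of _ y] conjI) (auto simp: abs_less_iff)
    qed
  qed
qed

lemma Fq_locally_bounded:
  fixes M :: "'n::finite mat1" and t :: "real^'n"
  assumes "bounded D" "M \<in> SLR" "t \<in> interior D"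
  shows "\<exists>U k. openin (prod_topology quot_top (top_of_set (interior D))) U \<and> (coset M, t) \<in> U \<and>
           (\<forall>q\<in>U. Fq D q < ereal k)"
proof -
  have "det M \<noteq> 0" using assms(2) by (simp add: SLR_def)
  obtain r where "r > 0" "ball t r \<subseteq> interior D"
    using assms(3) open_interior open_contains_ball by blast
  define r' where "r' = r / (real CARD('n) + 1)"
  have "r' > 0" using \<open>r > 0\<close> by (simp add: r'_def)
  obtain v where v: "v \<in> int_vecs" "0 < (v v* M)$None" "\<And>i. \<bar>(v v* M)$Some i\<bar> < r'"
    using exists_lattice_vector_narrow[OF \<open>det M \<noteq> 0\<close> \<open>r' > 0\<close>] by blast
  let ?x = "fst (split_vec (v v* M))"
  have "norm ?x \<le> (\<Sum>i\<in>UNIV. \<bar>?x $ i\<bar>)" by (rule norm_le_l1_cart)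
  also have "\<dots> \<le> real CARD('n) * r'"
    using sum_bounded_above[of UNIV "\<lambda>i. \<bar>?x $ i\<bar>" r'] v(3) by (simp add: split_vec_def less_imp_le)
  also have "\<dots> < r" using \<open>r > 0\<close> by (simp add: r'_def field_simps)
  finally have "dist t (?x + t) < r" by (simp add: dist_norm)
  then have "?x + t \<in> interior D" using \<open>ball t r \<subseteq> interior D\<close> by auto
  then have "eventually (\<lambda>p. det (fst p) \<noteq> 0 \<longrightarrow> Ffun D (fst p) (snd p) < ereal ((v v* M)$None + 1))
      (nhds (M, t))"
    using eventually_Ffun_less[OF assms(1) v(1)] v(2) by simp
  then have "eventually (\<lambda>p. fst p \<in> SLR \<longrightarrow> Ffun D (fst p) (snd p) \<in> {..< ereal ((v v* M)$None + 1)})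
      (nhds (M, t))"
    by (rule eventually_mono) (simp add: SLR_def)
  from Fq_nbhd_if_eventually[OF assms(2,3) this] show ?thesis by auto
qed

lemma continuous_at_pt_Fq:
  fixes M :: "'n::finite mat1" and t :: "real^'n"
  assumes "bounded D" "M \<in> SLR" "t \<in> interior D" "Ffun D M t < ereal \<kappa>"
    and no_boundary: "(lattice M - {0}) \<inter> frontier ((\<lambda>x. x - t) ` D \<times> {0..\<kappa>}) = {}"
  shows "continuous_at_pt (prod_topology quot_top (top_of_set (interior D))) (Fq D) (coset M, t)"
  unfolding continuous_at_pt_def
proof (intro allI impI)
  fix V assume V: "open V \<and> Fq D (coset M, t) \<in> V"
  have "Ffun D M t \<noteq> \<infinity>" using assms(4) by auto
  then obtain y0 where y0: "Ffun D M t = ereal y0" by (blast elim: Ffun_finiteE)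
  then have "y0 < \<kappa>" using assms(4) by simp
  have "open (ereal -` V)" "y0 \<in> ereal -` V" using V y0 by (auto simp: Fq_coset open_ereal_vimage)
  then obtain \<epsilon> where "\<epsilon> > 0" and \<epsilon>: "ball y0 \<epsilon> \<subseteq> ereal -` V" using open_contains_ball by blast
  have "det M \<noteq> 0" using assms(2) by (simp add: SLR_def)
  have "eventually (\<lambda>p. fst p \<in> SLR \<longrightarrow> Ffun D (fst p) (snd p) \<in> V) (nhds (M, t))"
    using eventually_Ffun_near[OF assms(1) \<open>det M \<noteq> 0\<close> y0 \<open>y0 < \<kappa>\<close> no_boundary \<open>\<epsilon> > 0\<close>]
    by (rule eventually_mono) (use \<epsilon> in \<open>auto simp: SLR_def dist_real_def subset_iff\<close>)
  then show "\<exists>U. openin (prod_topology quot_top (top_of_set (interior D))) U \<and> (coset M, t) \<in> U \<and>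
      (\<forall>q\<in>U. Fq D q \<in> V)"
    by (rule Fq_nbhd_if_eventually[OF assms(2,3)])
qed

theorem proposition2p2:
  fixes D :: "(real ^ 'n::finite) set"
    and C :: "(('n mat1 set) \<times> (real ^ 'n)) set"
  assumes "bounded D"
    and "interior D \<noteq> {}"
    and "compactin (prod_topology quot_top (top_of_set (interior D))) C"
  shows "\<exists>\<kappa>::real. \<kappa> > 0 \<and>
     (\<forall>M t. M \<in> SLR \<and> (coset M, t) \<in> C \<longrightarrow> Ffun D M t < ereal \<kappa>) \<and>
     (\<forall>M t. M \<in> SLR \<and> (coset M, t) \<in> C \<and>
        (lattice M - {0}) \<inter> frontier ((\<lambda>x. x - t) ` D \<times> {0..\<kappa>}) = {} \<longrightarrow>
        continuous_at_pt (prod_topology quot_top (top_of_set (interior D))) (Fq D) (coset M, t))"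
proof -
  have C_sub: "C \<subseteq> cosets \<times> interior D"
    using compactin_subset_topspace[OF assms(3)] topspace_quot_top_subset by auto
  have "\<exists>U k. openin (prod_topology quot_top (top_of_set (interior D))) U \<and> p \<in> U \<and>
      (\<forall>q\<in>U. Fq D q < ereal k)" if "p \<in> C" for p
    using that C_sub Fq_locally_bounded[OF assms(1)] by (auto simp: cosets_def)
  then obtain \<kappa> where "\<kappa> > 0" and bound: "\<forall>p\<in>C. Fq D p < ereal \<kappa>"
    using compactin_uniform_bound[OF assms(3)] by blast
  then have F_bound: "Ffun D M t < ereal \<kappa>" if "(coset M, t) \<in> C" for M t
    using that by (auto simp: Fq_coset)
  show ?thesis
  proof (intro exI[of _ \<kappa>] conjI allI impI)
    show "\<kappa> > 0" by fact
    show "Ffun D M t < ereal \<kappa>" if "M \<in> SLR \<and> (coset M, t) \<in> C" for M t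
      using F_bound that by blast
    show "continuous_at_pt (prod_topology quot_top (top_of_set (interior D))) (Fq D) (coset M, t)"
      if "M \<in> SLR \<and> (coset M, t) \<in> C \<and>
        (lattice M - {0}) \<inter> frontier ((\<lambda>x. x - t) ` D \<times> {0..\<kappa>}) = {}" for M t
      using that C_sub F_bound continuous_at_pt_Fq[OF assms(1)] by blast
  qed
qed

end
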